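(* Let $p>1$ and let $\varphi:\mathbb{R}^n\to\mathbb{R}\cup\{+\infty\}$ be proper and lower semicontinuous, and suppose $\varphi$ satisfies the KL property with an exponent $\theta\in\big[\frac{p-1}{p},1\big)$ (at every point of $\operatorname{Dom}\partial\varphi$). Then: (a) for $\gamma>0$, the function $\Phi(x,y)=\varphi(y)+\frac{1}{p\gamma}\|x-y\|^p$ satisfies the KL property with the same exponent $\theta$; (b) if $\varphi$ is high-order prox-bounded with threshold $\gamma^{\varphi,p}>0$, then for any $\gamma\in(0,\gamma^{\varphi,p})$ the function $\varphi^p_\gamma$ satisfies the KL property with exponent $\theta$.
   Context: For a proper lsc $h$, $\partial h$ denotes the Mordukhovich (limiting) subdifferential and $\operatorname{Dom}\partial h=\{x:\partial h(x)\neq\emptyset\}$. $h$ satisfies the KL property at $\bar x\in\operatorname{Dom}\partial h$ if there are $r>0$, $\eta\in(0,+\infty]$ and a concave continuous $\phi:[0,\eta)\to[0,\infty)$ with $\phi(0)=0$, $\phi\in C^1(0,\eta)$, $\phi'>0$ on $(0,\eta)$, such that $\phi'(|h(x)-h(\bar x)|)\operatorname{dist}(0,\partial h(x))\ge1$ whenever $x\in\mathbb{B}(\bar x;r)\cap\operatorname{Dom}\partial h$ and $0<|h(x)-h(\bar x)|<\eta$; it does so with exponent $\theta\in[0,1)$ if $\phi(t)=ct^{1-\theta}$ for some $c>0$. $\varphi^p_\gamma(x):=\inf_y\big(\varphi(y)+\frac{1}{p\gamma}\|x-y\|^p\big)$; $\varphi$ is high-order prox-bounded if $\varphi^p_\gamma(x)>-\infty$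 for some $\gamma>0,x$, and the supremum of such $\gamma$ is the threshold $\gamma^{\varphi,p}$. *)

theory Defs
  imports "HOL-Analysis.Analysis"
begin

definition proper_fun :: "('a \<Rightarrow> ereal) \<Rightarrow> bool" where
  "proper_fun h \<longleftrightarrow> (\<forall>x. h x \<noteq> -\<infinity>) \<and> (\<exists>x. h x \<noteq> \<infinity>)"

definition lsc_fun :: "('a::topological_space \<Rightarrow> ereal) \<Rightarrow> bool" where
  "lsc_fun h \<longleftrightarrow> (\<forall>x. h x \<le> Liminf (at x) h)"

definition frechet_subdiff :: "('a::real_inner \<Rightarrow> ereal) \<Rightarrow> 'a \<Rightarrow> 'a set" where
  "frechet_subdiff h x = {v. \<bar>h x\<bar> \<noteq> \<infinity> \<and>
     (\<forall>\<epsilon>>0. \<forall>\<^sub>F y in at x. h x + ereal (v \<bullet> (y - x) - \<epsilon> * norm (y - x)) \<le> h y)}"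

definition limiting_subdiff :: "('a::real_inner \<Rightarrow> ereal) \<Rightarrow> 'a \<Rightarrow> 'a set" where
  "limiting_subdiff h x = {v. \<bar>h x\<bar> \<noteq> \<infinity> \<and>
     (\<exists>xs vs. xs \<longlonglongrightarrow> x \<and> (\<lambda>k. h (xs k)) \<longlonglongrightarrow> h x \<and>
        (\<forall>k. vs k \<in> frechet_subdiff h (xs k)) \<and> vs \<longlonglongrightarrow> v)}"

definition dom_subdiff :: "('a::real_inner \<Rightarrow> ereal) \<Rightarrow> 'a set" where
  "dom_subdiff h = {x. limiting_subdiff h x \<noteq> {}}"

definition desing :: "ereal \<Rightarrow> (real \<Rightarrow> real) \<Rightarrow> bool" where
  "desing \<eta> \<phi> \<longleftrightarrow>
     concave_on {t. 0 \<le> t \<and> ereal t < \<eta>} \<phi> \<and>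
     continuous_on {t. 0 \<le> t \<and> ereal t < \<eta>} \<phi> \<and>
     \<phi> 0 = 0 \<and> (\<forall>t. 0 \<le> t \<and> ereal t < \<eta> \<longrightarrow> 0 \<le> \<phi> t) \<and>
     (\<forall>t. 0 < t \<and> ereal t < \<eta> \<longrightarrow> \<phi> differentiable (at t)) \<and>
     continuous_on {t. 0 < t \<and> ereal t < \<eta>} (deriv \<phi>) \<and>
     (\<forall>t. 0 < t \<and> ereal t < \<eta> \<longrightarrow> 0 < deriv \<phi> t)"

definition KL_with :: "('a::real_inner \<Rightarrow> ereal) \<Rightarrow> 'a \<Rightarrow> (real \<Rightarrow> real) \<Rightarrow> bool" where
  "KL_with h xbar \<phi> \<longleftrightarrow>
     (\<exists>r>0. \<exists>\<eta>>0. desing \<eta> \<phi> \<and>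
        (\<forall>x. x \<in> cball xbar r \<and> x \<in> dom_subdiff h \<and>
              0 < \<bar>h x - h xbar\<bar> \<and> \<bar>h x - h xbar\<bar> < \<eta> \<longrightarrow>
              deriv \<phi> (real_of_ereal \<bar>h x - h xbar\<bar>) * infdist 0 (limiting_subdiff h x) \<ge> 1))"

definition KL_at :: "('a::real_inner \<Rightarrow> ereal) \<Rightarrow> 'a \<Rightarrow> bool" where
  "KL_at h xbar \<longleftrightarrow> xbar \<in> dom_subdiff h \<and> (\<exists>\<phi>. KL_with h xbar \<phi>)"

definition KL_exponent_at :: "('a::real_inner \<Rightarrow> ereal) \<Rightarrow> 'a \<Rightarrow> real \<Rightarrow> bool" where
  "KL_exponent_at h xbar \<theta> \<longleftrightarrow> 0 \<le> \<theta> \<and> \<theta> < 1 \<and> xbar \<in> dom_subdiff h \<and>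
     (\<exists>c>0. KL_with h xbar (\<lambda>t. c * t powr (1 - \<theta>)))"

definition KL_exponent :: "('a::real_inner \<Rightarrow> ereal) \<Rightarrow> real \<Rightarrow> bool" where
  "KL_exponent h \<theta> \<longleftrightarrow> (\<forall>x\<in>dom_subdiff h. KL_exponent_at h x \<theta>)"

definition hmoreau :: "('a::real_normed_vector \<Rightarrow> ereal) \<Rightarrow> real \<Rightarrow> real \<Rightarrow> 'a \<Rightarrow> ereal" where
  "hmoreau \<phi> p \<gamma> x = (INF y. \<phi> y + ereal (norm (x - y) powr p / (p * \<gamma>)))"

definition hprox_bounded :: "('a::real_normed_vector \<Rightarrow> ereal) \<Rightarrow> real \<Rightarrow> bool" where
  "hprox_bounded \<phi> p \<longleftrightarrow> (\<exists>\<gamma>>0. \<exists>x. hmoreau \<phi> p \<gamma> x > -\<infinity>)"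

definition hprox_threshold :: "('a::real_normed_vector \<Rightarrow> ereal) \<Rightarrow> real \<Rightarrow> ereal" where
  "hprox_threshold \<phi> p = Sup {ereal \<gamma> | \<gamma>. \<gamma> > 0 \<and> (\<exists>x. hmoreau \<phi> p \<gamma> x > -\<infinity>)}"

end

theory Submission
  imports Defs
begin

(*
  Both claims go through a sequential form of the KL inequality: if it failed at xb, there would be
  points x_k -> xb with h x_k -> h xb and subgradients u_k -> 0 violating it at every rate.  For the
  coupling Phi (x, y) = phi y + |x - y|^p / (p gamma), and for the envelope via a proximal point y_k
  of x_k, such a u_k contains the gradient |x_k - y_k|^(p-2) (x_k - y_k) / gamma of the coupling
  term, so u_k -> 0 forces x_k - y_k -> 0.  Hence y_k tends to a point yb with h xb = phi yb (for
  the envelope yb = xb, by lower semicontinuity, and xb is then a critical point of phi), and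
  h x_k - h xb = (phi y_k - phi yb) + |x_k - y_k|^p / (p gamma).  The first term is controlled by
  the KL inequality of phi at yb, the second by |x_k - y_k|^(p-1) since p theta >= p - 1.  For the
  envelope, gamma below the prox-boundedness threshold makes proximal points exist and stay bounded.
*)

section \<open>Power desingularizers and the Lojasiewicz form of the KL inequality\<close>

lemma concave_on_powr:
  fixes a :: real
  assumes "0 < a" "a \<le> 1"
  shows "concave_on {0..} (\<lambda>t. t powr a)"
proof (rule concave_on_linorderI)
  have pos: "concave_on {0<..} (\<lambda>t::real. t powr a)"
  proof (rule f''_le0_imp_concave)
    fix t :: real assume "t \<in> {0<..}"
    then show "((\<lambda>t. t powr a) has_real_derivative a * t powr (a - 1)) (at t)"
      "((\<lambda>t. a * t powr (a - 1)) has_real_derivative a * ((a - 1) * t powr (a - 1 - 1))) (at t)"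
      by (auto intro!: derivative_eq_intros)
    show "a * ((a - 1) * t powr (a - 1 - 1)) \<le> 0"
      using assms by (intro mult_nonneg_nonpos mult_nonpos_nonneg) auto
  qed simp
  fix t x y :: real
  assume t: "0 < t" "t < 1" and xy: "x \<in> {0..}" "y \<in> {0..}" "x < y"
  show "(1 - t) * x powr a + t * y powr a \<le> ((1 - t) *\<^sub>R x + t *\<^sub>R y) powr a"
  proof (cases "x = 0")
    case True
    have "t \<le> t powr a"
      using powr_mono'[of a 1 t] t assms by simp
    then have "t * y powr a \<le> t powr a * y powr a"
      by (rule mult_right_mono) simp
    then show ?thesis using True t xy by (simp add: powr_mult)
  next
    case False
    then show ?thesis
      using concave_onD[OF pos, of t x y] t xy by simp
  qed
qed simp

lemma has_real_derivative_powr_desing: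
  fixes c \<theta> t :: real
  assumes "t > 0"
  shows "((\<lambda>t. c * t powr (1 - \<theta>)) has_real_derivative c * (1 - \<theta>) * t powr (- \<theta>)) (at t)"
  using assms by (auto intro!: derivative_eq_intros)

lemma deriv_powr_desing:
  fixes c \<theta> t :: real
  assumes "t > 0"
  shows "deriv (\<lambda>t. c * t powr (1 - \<theta>)) t = c * (1 - \<theta>) * t powr (- \<theta>)"
  using has_real_derivative_powr_desing[OF assms] by (rule DERIV_imp_deriv)

lemma desing_powr:
  fixes c \<theta> :: real and \<eta> :: ereal
  assumes "c > 0" "0 \<le> \<theta>" "\<theta> < 1"
  shows "desing \<eta> (\<lambda>t. c * t powr (1 - \<theta>))"
proof -
  let ?S = "{t. 0 \<le> t \<and> ereal t < \<eta>}"
  let ?T = "{t. 0 < t \<and> ereal t < \<eta>}"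
  have "is_interval ?S"
    unfolding is_interval_1 by (auto intro: le_less_trans[of _ "ereal _"])
  then have "convex ?S"
    by (simp add: is_interval_convex_1)
  moreover have "concave_on {0..} (\<lambda>t. t powr (1 - \<theta>))"
    using assms by (intro concave_on_powr) auto
  ultimately have "concave_on ?S (\<lambda>t. t powr (1 - \<theta>))"
    unfolding concave_on_def by (metis (lifting) convex_on_subset atLeast_iff mem_Collect_eq subsetI)
  then have "concave_on ?S (\<lambda>t. c * t powr (1 - \<theta>))"
    using assms by (intro concave_on_cmul) auto
  moreover have "continuous_on ?S (\<lambda>t. c * t powr (1 - \<theta>))"
    using assms by (intro continuous_intros continuous_on_powr') auto
  moreover have "continuous_on ?T (deriv (\<lambda>t. c * t powr (1 - \<theta>)))"
  proof -
    have "continuous_on ?T (\<lambda>t. c * (1 - \<theta>) * t powr (- \<theta>))"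
      by (intro continuous_intros) auto
    then show ?thesis
      by (rule continuous_on_cong[THEN iffD1, rotated 2]) (auto simp: deriv_powr_desing)
  qed
  moreover have "(\<lambda>t. c * t powr (1 - \<theta>)) differentiable (at t)" if "t > 0" for t
    using has_real_derivative_powr_desing[OF that] real_differentiable_def by blast
  ultimately show ?thesis
    using assms unfolding desing_def by (auto simp: deriv_powr_desing)
qed

lemma one_le_deriv_powr_desing_mult_iff:
  fixes c \<theta> t D :: real
  assumes "t > 0"
  shows "1 \<le> deriv (\<lambda>t. c * t powr (1 - \<theta>)) t * D \<longleftrightarrow> t powr \<theta> \<le> c * (1 - \<theta>) * D"
proof -
  let ?X = "deriv (\<lambda>t. c * t powr (1 - \<theta>)) t * D"
  have "t powr \<theta> * t powr (- \<theta>) = 1"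
    using assms by (simp flip: powr_add)
  then have eq: "t powr \<theta> * ?X = c * (1 - \<theta>) * D"
    unfolding deriv_powr_desing[OF assms] by (metis mult.commute mult.left_commute mult_1)
  have "1 \<le> ?X \<longleftrightarrow> t powr \<theta> * 1 \<le> t powr \<theta> * ?X"
    using assms by (simp only: mult_le_cancel_left_pos powr_gt_zero)
  then show ?thesis
    by (simp only: eq mult_1_right)
qed

lemma pos_abs_ereal_lessE:
  fixes z \<eta> :: ereal
  assumes "0 < \<bar>z\<bar>" "\<bar>z\<bar> < \<eta>"
  obtains t where "\<bar>z\<bar> = ereal t" "t > 0"
  using assms by (cases z) auto

text \<open>The KL inequality with desingularizer \<open>c t\<^sup>1\<^sup>-\<^sup>\<theta>\<close>, rewritten as
  \<open>|h x - h xb|\<^sup>\<theta> \<le> K dist(0, \<partial>h x)\<close> with \<open>K = c (1 - \<theta>)\<close>.\<close>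

definition lojasiewicz_ineq ::
    "('a::real_inner \<Rightarrow> ereal) \<Rightarrow> 'a \<Rightarrow> real \<Rightarrow> real \<Rightarrow> real \<Rightarrow> real \<Rightarrow> bool" where
  "lojasiewicz_ineq h xb \<theta> K r \<eta> \<longleftrightarrow>
     (\<forall>x \<in> cball xb r \<inter> dom_subdiff h. 0 < \<bar>h x - h xb\<bar> \<and> \<bar>h x - h xb\<bar> < ereal \<eta> \<longrightarrow>
        real_of_ereal \<bar>h x - h xb\<bar> powr \<theta> \<le> K * infdist 0 (limiting_subdiff h x))"

lemma KL_exponent_atE_lojasiewicz:
  assumes "KL_exponent_at h xb \<theta>"
  obtains K r \<eta> where "K > 0" "r > 0" "\<eta> > 0" "lojasiewicz_ineq h xb \<theta> K r \<eta>"
proof -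
  obtain c r \<eta> where c: "c > 0" and r: "r > 0" and \<eta>: "\<eta> > 0" and
    H: "\<And>x. x \<in> cball xb r \<and> x \<in> dom_subdiff h \<and> 0 < \<bar>h x - h xb\<bar> \<and> \<bar>h x - h xb\<bar> < \<eta> \<Longrightarrow>
        1 \<le> deriv (\<lambda>t. c * t powr (1 - \<theta>)) (real_of_ereal \<bar>h x - h xb\<bar>) * infdist 0 (limiting_subdiff h x)"
    using assms unfolding KL_exponent_at_def KL_with_def by blast
  obtain e where e: "0 < ereal e" "ereal e < \<eta>"
    using ereal_dense2[OF \<eta>] by blast
  have "lojasiewicz_ineq h xb \<theta> (c * (1 - \<theta>)) r e"
    unfolding lojasiewicz_ineq_def
  proof (intro ballI impI)
    fix x assume x: "x \<in> cball xb r \<inter> dom_subdiff h" "0 < \<bar>h x - h xb\<bar> \<and> \<bar>h x - h xb\<bar> < ereal e"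
    then obtain t where t: "\<bar>h x - h xb\<bar> = ereal t" "t > 0"
      by (meson pos_abs_ereal_lessE)
    have "\<bar>h x - h xb\<bar> < \<eta>"
      using x(2) e(2) by (meson less_trans)
    then have "1 \<le> deriv (\<lambda>t. c * t powr (1 - \<theta>)) t * infdist 0 (limiting_subdiff h x)"
      using H[of x] x t(1) by simp
    then show "real_of_ereal \<bar>h x - h xb\<bar> powr \<theta> \<le> c * (1 - \<theta>) * infdist 0 (limiting_subdiff h x)"
      using one_le_deriv_powr_desing_mult_iff[OF t(2)] t(1) by simp
  qed
  moreover have "c * (1 - \<theta>) > 0" "e > 0"
    using c assms e(1) by (simp_all add: KL_exponent_at_def)
  ultimately show ?thesis
    using r that by blast
qed

lemma KL_exponent_atI_lojasiewicz:
  assumes \<theta>: "0 \<le> \<theta>" "\<theta> < 1" and xb: "xb \<in> dom_subdiff h"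
    and K: "K > 0" and r: "r > 0" and \<eta>: "\<eta> > 0" and loj: "lojasiewicz_ineq h xb \<theta> K r \<eta>"
  shows "KL_exponent_at h xb \<theta>"
proof -
  define c where "c = K / (1 - \<theta>)"
  have c: "c > 0" "c * (1 - \<theta>) = K"
    using K \<theta> by (simp_all add: c_def)
  have "KL_with h xb (\<lambda>t. c * t powr (1 - \<theta>))"
    unfolding KL_with_def
  proof (intro exI conjI allI impI)
    show "desing (ereal \<eta>) (\<lambda>t. c * t powr (1 - \<theta>))"
      using c \<theta> by (intro desing_powr) auto
    fix x assume x: "x \<in> cball xb r \<and> x \<in> dom_subdiff h \<and> 0 < \<bar>h x - h xb\<bar> \<and> \<bar>h x - h xb\<bar> < ereal \<eta>"
    then obtain t where t: "\<bar>h x - h xb\<bar> = ereal t" "t > 0"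
      by (meson pos_abs_ereal_lessE)
    have "t powr \<theta> \<le> c * (1 - \<theta>) * infdist 0 (limiting_subdiff h x)"
      using loj x t(1) unfolding lojasiewicz_ineq_def c(2) by (metis IntI mem_cball real_of_ereal.simps(1))
    then show "1 \<le> deriv (\<lambda>t. c * t powr (1 - \<theta>)) (real_of_ereal \<bar>h x - h xb\<bar>) * infdist 0 (limiting_subdiff h x)"
      using one_le_deriv_powr_desing_mult_iff[OF t(2)] t(1) by simp
  qed (use r \<eta> in simp_all)
  then show ?thesis
    using \<theta> xb c unfolding KL_exponent_at_def by blast
qed

lemma infdist_lessE:
  assumes "A \<noteq> {}" "infdist x A < d"
  obtains a where "a \<in> A" "dist x a < d"
proof -
  have "(INF a\<in>A. dist x a) < d"
    using assms by (simp add: infdist_notempty)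
  then show ?thesis
    using assms(1) that by (auto simp: cINF_less_iff intro: bdd_belowI[of _ 0])
qed

lemma limiting_subdiff_finite: "v \<in> limiting_subdiff h x \<Longrightarrow> \<bar>h x\<bar> \<noteq> \<infinity>"
  by (simp add: limiting_subdiff_def)

lemma dom_subdiff_finite: "x \<in> dom_subdiff h \<Longrightarrow> \<bar>h x\<bar> \<noteq> \<infinity>"
  unfolding dom_subdiff_def using limiting_subdiff_finite by fastforce

lemma not_lojasiewicz_ineqE:
  assumes "\<not> lojasiewicz_ineq h xb \<theta> K r \<eta>" "K > 0"
  obtains x u where "x \<in> cball xb r" "0 < real_of_ereal \<bar>h x - h xb\<bar>" "real_of_ereal \<bar>h x - h xb\<bar> < \<eta>"
    "u \<in> limiting_subdiff h x" "K * norm u < real_of_ereal \<bar>h x - h xb\<bar> powr \<theta>"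
proof -
  obtain x where x: "x \<in> cball xb r" "x \<in> dom_subdiff h" "0 < \<bar>h x - h xb\<bar>" "\<bar>h x - h xb\<bar> < ereal \<eta>"
    and less: "K * infdist 0 (limiting_subdiff h x) < real_of_ereal \<bar>h x - h xb\<bar> powr \<theta>"
    using assms(1) unfolding lojasiewicz_ineq_def by auto
  obtain t where t: "\<bar>h x - h xb\<bar> = ereal t" "t > 0"
    using x(3,4) by (rule pos_abs_ereal_lessE)
  have "limiting_subdiff h x \<noteq> {}"
    using x(2) by (simp add: dom_subdiff_def)
  moreover have "infdist 0 (limiting_subdiff h x) < real_of_ereal \<bar>h x - h xb\<bar> powr \<theta> / K"
    using less assms(2) by (simp add: field_simps)
  ultimately obtain u where "u \<in> limiting_subdiff h x" "dist 0 u < real_of_ereal \<bar>h x - h xb\<bar> powr \<theta> / K"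
    by (rule infdist_lessE)
  with x t that show ?thesis
    using assms(2) by (simp add: field_simps)
qed

lemma tendsto_ereal_of_abs_diff:
  fixes f :: "nat \<Rightarrow> ereal"
  assumes "\<And>k. \<bar>f k\<bar> \<noteq> \<infinity>" "\<bar>a\<bar> \<noteq> \<infinity>" "(\<lambda>k. real_of_ereal \<bar>f k - a\<bar>) \<longlonglongrightarrow> 0"
  shows "f \<longlonglongrightarrow> a"
proof -
  have "real_of_ereal \<bar>f k - a\<bar> = \<bar>real_of_ereal (f k) - real_of_ereal a\<bar>" for k
    using assms(1,2) by (simp add: real_of_ereal_minus flip: abs_real_of_ereal)
  then have "(\<lambda>k. real_of_ereal (f k) - real_of_ereal a) \<longlonglongrightarrow> 0"
    using assms(3) by (subst tendsto_rabs_zero_iff[symmetric]) simp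
  then have "(\<lambda>k. ereal (real_of_ereal (f k))) \<longlonglongrightarrow> ereal (real_of_ereal a)"
    by (simp add: LIM_zero_iff)
  then show ?thesis
    using assms(1,2) by (simp add: ereal_real)
qed

lemma tendsto_ereal_add_real_cancel:
  fixes u :: "nat \<Rightarrow> ereal"
  assumes "(\<lambda>k. u k + ereal (c k)) \<longlonglongrightarrow> v + ereal d" "c \<longlonglongrightarrow> d"
  shows "u \<longlonglongrightarrow> v"
proof -
  have cancel: "w + ereal e + ereal (- e) = w" for w e
    by (cases w) auto
  have "(\<lambda>k. (u k + ereal (c k)) + ereal (- c k)) \<longlonglongrightarrow> (v + ereal d) + ereal (- d)"
    by (rule tendsto_add_ereal_general1[OF _ assms(1)]) (use assms(2) in \<open>auto intro: tendsto_intros\<close>)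
  then show ?thesis
    unfolding cancel .
qed

lemma not_KL_exponent_atE:
  fixes h :: "'a::real_inner \<Rightarrow> ereal"
  assumes \<theta>: "0 \<le> \<theta>" "\<theta> < 1" and xb: "xb \<in> dom_subdiff h" and fail: "\<not> KL_exponent_at h xb \<theta>"
  obtains xs us where "xs \<longlonglongrightarrow> xb" "(\<lambda>k. h (xs k)) \<longlonglongrightarrow> h xb" "\<And>k. us k \<in> limiting_subdiff h (xs k)"
    "us \<longlonglongrightarrow> 0" "\<And>k. Suc k * norm (us k) < real_of_ereal \<bar>h (xs k) - h xb\<bar> powr \<theta>"
proof -
  let ?t = "\<lambda>x. real_of_ereal \<bar>h x - h xb\<bar>"
  have "\<not> lojasiewicz_ineq h xb \<theta> (Suc k) (inverse (Suc k)) (inverse (Suc k))" for k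
    using KL_exponent_atI_lojasiewicz[OF \<theta> xb, of "Suc k" "inverse (Suc k)" "inverse (Suc k)"] fail
    by (simp del: of_nat_Suc) blast
  then have "\<forall>k. \<exists>x u. x \<in> cball xb (inverse (Suc k)) \<and> 0 < ?t x \<and> ?t x < inverse (Suc k) \<and>
      u \<in> limiting_subdiff h x \<and> Suc k * norm u < ?t x powr \<theta>"
    by (metis not_lojasiewicz_ineqE of_nat_0_less_iff zero_less_Suc)
  then obtain xs us where xs: "\<And>k. xs k \<in> cball xb (inverse (Suc k))"
    and t: "\<And>k. 0 < ?t (xs k)" "\<And>k. ?t (xs k) < inverse (Suc k)"
    and us: "\<And>k. us k \<in> limiting_subdiff h (xs k)" and fast: "\<And>k. Suc k * norm (us k) < ?t (xs k) powr \<theta>"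
    by metis
  have inv: "(\<lambda>k. inverse (real (Suc k))) \<longlonglongrightarrow> 0"
    by (rule LIMSEQ_inverse_real_of_nat)
  have "(\<lambda>k. dist (xs k) xb) \<longlonglongrightarrow> 0"
    using xs by (intro Lim_null_comparison[OF _ inv]) (simp add: dist_commute)
  moreover have "(\<lambda>k. h (xs k)) \<longlonglongrightarrow> h xb"
  proof (rule tendsto_ereal_of_abs_diff)
    show "\<bar>h (xs k)\<bar> \<noteq> \<infinity>" for k
      using us[of k] by (rule limiting_subdiff_finite)
    show "\<bar>h xb\<bar> \<noteq> \<infinity>"
      using xb by (rule dom_subdiff_finite)
    show "(\<lambda>k. ?t (xs k)) \<longlonglongrightarrow> 0"
      using t by (intro Lim_null_comparison[OF _ inv]) (simp add: less_imp_le)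
  qed
  moreover have "norm (us k) \<le> inverse (Suc k)" for k
  proof -
    have "inverse (real (Suc k)) \<le> 1"
      by (simp add: inverse_le_1_iff)
    then have "?t (xs k) powr \<theta> \<le> 1"
      using t[of k] \<theta> by (intro powr_le1) auto
    then show ?thesis
      using fast[of k] by (simp add: field_simps del: of_nat_Suc)
  qed
  then have "us \<longlonglongrightarrow> 0"
    by (intro Lim_null_comparison[OF _ inv]) simp
  ultimately show ?thesis
    using that us fast tendsto_dist_iff[THEN iffD2] by blast
qed

lemma KL_exponent_atI_sequentially:
  fixes h :: "'a::real_inner \<Rightarrow> ereal"
  assumes \<theta>: "0 \<le> \<theta>" "\<theta> < 1" and xb: "xb \<in> dom_subdiff h"
    and seq: "\<And>xs us. xs \<longlonglongrightarrow> xb \<Longrightarrow> (\<lambda>k. h (xs k)) \<longlonglongrightarrow> h xb \<Longrightarrow>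
      (\<And>k. us k \<in> limiting_subdiff h (xs k)) \<Longrightarrow> us \<longlonglongrightarrow> 0 \<Longrightarrow>
      \<exists>K. \<forall>\<^sub>F k in sequentially. real_of_ereal \<bar>h (xs k) - h xb\<bar> powr \<theta> \<le> K * norm (us k)"
  shows "KL_exponent_at h xb \<theta>"
proof (rule ccontr)
  assume "\<not> KL_exponent_at h xb \<theta>"
  then obtain xs us where xs: "xs \<longlonglongrightarrow> xb" and val: "(\<lambda>k. h (xs k)) \<longlonglongrightarrow> h xb"
    and us: "\<And>k. us k \<in> limiting_subdiff h (xs k)" and us_lim: "us \<longlonglongrightarrow> 0"
    and fast: "\<And>k. Suc k * norm (us k) < real_of_ereal \<bar>h (xs k) - h xb\<bar> powr \<theta>"
    by (rule not_KL_exponent_atE[OF \<theta> xb], blast)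
  obtain K where "\<forall>\<^sub>F k in sequentially. real_of_ereal \<bar>h (xs k) - h xb\<bar> powr \<theta> \<le> K * norm (us k)"
    using seq[OF xs val us us_lim] by blast
  moreover have "\<forall>\<^sub>F k in sequentially. K \<le> Suc k"
    by (rule eventually_sequentiallyI[of "nat \<lceil>K\<rceil>"]) linarith
  ultimately have "\<forall>\<^sub>F k in sequentially. False"
  proof eventually_elim
    case (elim k)
    then have "K * norm (us k) \<le> Suc k * norm (us k)"
      by (intro mult_right_mono) auto
    with elim(1) fast[of k] show False
      by linarith
  qed
  then show False
    by simp
qed

section \<open>Frechet and limiting subgradients\<close>

lemma frechet_subdiff_finite: "v \<in> frechet_subdiff h x \<Longrightarrow> \<bar>h x\<bar> \<noteq> \<infinity>"
  by (simp add: frechet_subdiff_def)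

lemma limiting_subdiffI:
  assumes "\<bar>h x\<bar> \<noteq> \<infinity>" "xs \<longlonglongrightarrow> x" "(\<lambda>k. h (xs k)) \<longlonglongrightarrow> h x"
    "\<And>k. vs k \<in> frechet_subdiff h (xs k)" "vs \<longlonglongrightarrow> v"
  shows "v \<in> limiting_subdiff h x"
  using assms unfolding limiting_subdiff_def by blast

lemma limiting_subdiffE:
  assumes "v \<in> limiting_subdiff h x"
  obtains xs vs where "\<bar>h x\<bar> \<noteq> \<infinity>" "xs \<longlonglongrightarrow> x" "(\<lambda>k. h (xs k)) \<longlonglongrightarrow> h x"
    "\<And>k. vs k \<in> frechet_subdiff h (xs k)" "vs \<longlonglongrightarrow> v"
  using assms that unfolding limiting_subdiff_def mem_Collect_eq by metis

lemma frechet_subdiff_imp_limiting: "v \<in> frechet_subdiff h x \<Longrightarrow> v \<in> limiting_subdiff h x"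
  by (rule limiting_subdiffI[where xs = "\<lambda>_. x" and vs = "\<lambda>_. v"]) (auto dest: frechet_subdiff_finite)

lemma frechet_subdiff_imp_dom: "v \<in> frechet_subdiff h x \<Longrightarrow> x \<in> dom_subdiff h"
  unfolding dom_subdiff_def by (blast dest: frechet_subdiff_imp_limiting)

lemma zero_frechet_subdiff_minimum:
  assumes "\<bar>h x\<bar> \<noteq> \<infinity>" "\<And>y. h x \<le> h y"
  shows "0 \<in> frechet_subdiff h x"
  unfolding frechet_subdiff_def
proof (intro CollectI conjI allI impI always_eventually)
  fix \<epsilon> :: real and y
  assume "\<epsilon> > 0"
  then have "h x + ereal (0 \<bullet> (y - x) - \<epsilon> * norm (y - x)) \<le> h x"
    using assms(1) by (cases "h x") auto
  then show "h x + ereal (0 \<bullet> (y - x) - \<epsilon> * norm (y - x)) \<le> h y"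
    using assms(2) order_trans by blast
qed (rule assms(1))

lemma frechet_subdiff_touching:
  assumes "v \<in> frechet_subdiff h x" "\<forall>\<^sub>F y in at x. h y \<le> g y" "h x = g x"
  shows "v \<in> frechet_subdiff g x"
  unfolding frechet_subdiff_def
proof (intro CollectI conjI allI impI)
  show "\<bar>g x\<bar> \<noteq> \<infinity>"
    using assms(1,3) by (simp add: frechet_subdiff_def)
  fix \<epsilon> :: real assume "\<epsilon> > 0"
  then have "\<forall>\<^sub>F y in at x. h x + ereal (v \<bullet> (y - x) - \<epsilon> * norm (y - x)) \<le> h y"
    using assms(1) by (simp add: frechet_subdiff_def)
  with assms(2) show "\<forall>\<^sub>F y in at x. g x + ereal (v \<bullet> (y - x) - \<epsilon> * norm (y - x)) \<le> g y"
    by eventually_elim (use assms(3) in \<open>metis order_trans\<close>)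
qed

lemma has_derivative_inner_approx:
  fixes G :: "'a::real_inner \<Rightarrow> real"
  assumes "(G has_derivative (\<lambda>d. w \<bullet> d)) (at x)" "\<epsilon> > 0"
  shows "\<forall>\<^sub>F y in at x. \<bar>G y - G x - w \<bullet> (y - x)\<bar> \<le> \<epsilon> * norm (y - x)"
proof -
  have "((\<lambda>y. norm (G y - G x - w \<bullet> (y - x)) / norm (y - x)) \<longlongrightarrow> 0) (at x)"
    using assms(1) by (simp add: has_derivative_iff_norm)
  then have "\<forall>\<^sub>F y in at x. norm (G y - G x - w \<bullet> (y - x)) / norm (y - x) < \<epsilon>"
    using assms(2) by (auto dest: order_tendstoD(2))
  moreover have "\<forall>\<^sub>F y in at x. y \<noteq> x"
    by (simp add: eventually_at_filter)
  ultimately show ?thesis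
    by eventually_elim (auto simp: field_simps)
qed

lemma filterlim_ray_at_right:
  fixes x d :: "'a::real_normed_vector"
  assumes "d \<noteq> 0"
  shows "filterlim (\<lambda>t. x + t *\<^sub>R d) (at x) (at_right 0)"
proof (rule filterlim_atI)
  show "((\<lambda>t. x + t *\<^sub>R d) \<longlongrightarrow> x) (at_right 0)"
    by (auto intro!: tendsto_eq_intros)
  show "\<forall>\<^sub>F t in at_right 0. x + t *\<^sub>R d \<noteq> x"
    using assms by (auto simp: eventually_at_right_field intro!: exI[of _ 1])
qed

text \<open>Testing the subgradient inequality along the ray \<open>x + t (v - w)\<close> gives
  \<open>\<parallel>v - w\<parallel>\<^sup>2 \<le> 2 \<epsilon> \<parallel>v - w\<parallel>\<close> for every \<open>\<epsilon> > 0\<close>.\<close>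

lemma frechet_subdiff_differentiable:
  fixes G :: "'a::real_inner \<Rightarrow> real"
  assumes v: "v \<in> frechet_subdiff (\<lambda>y. ereal (G y)) x"
    and G: "(G has_derivative (\<lambda>d. w \<bullet> d)) (at x)"
  shows "v = w"
proof (rule ccontr)
  assume "v \<noteq> w"
  define d where "d = v - w"
  define \<epsilon> where "\<epsilon> = norm d / 4"
  have nd: "norm d > 0" and \<epsilon>: "\<epsilon> > 0"
    using \<open>v \<noteq> w\<close> by (simp_all add: d_def \<epsilon>_def)
  have "\<forall>\<^sub>F y in at x. G x + (v \<bullet> (y - x) - \<epsilon> * norm (y - x)) \<le> G y"
    using v \<epsilon> by (simp add: frechet_subdiff_def)
  with has_derivative_inner_approx[OF G \<epsilon>]
  have ray: "\<forall>\<^sub>F y in at x. d \<bullet> (y - x) \<le> 2 * \<epsilon> * norm (y - x)"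
    by eventually_elim (auto simp: d_def inner_diff_left)
  have "d \<noteq> 0"
    using nd by simp
  from filterlim_iff[THEN iffD1, OF filterlim_ray_at_right[OF this], rule_format, OF ray]
  have "\<forall>\<^sub>F t in at_right (0::real). d \<bullet> (t *\<^sub>R d) \<le> 2 * \<epsilon> * norm (t *\<^sub>R d)"
    by simp
  moreover have "\<forall>\<^sub>F t in at_right (0::real). t > 0"
    by (simp add: eventually_at_right_field) (auto intro!: exI[of _ 1])
  ultimately have "\<forall>\<^sub>F t in at_right (0::real). False"
  proof eventually_elim
    case (elim t)
    then have "t * (norm d * norm d) \<le> t * (2 * \<epsilon> * norm d)"
      by (simp add: power2_norm_eq_inner[symmetric] power2_eq_square mult_ac)
    then have "norm d * norm d \<le> 2 * \<epsilon> * norm d"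
      using elim(2) by simp
    moreover have "2 * \<epsilon> * norm d = norm d * norm d / 2"
      by (simp add: \<epsilon>_def)
    ultimately show False
      using mult_pos_pos[OF nd nd] by linarith
  qed
  then show False
    by (simp add: trivial_limit_at_right_real)
qed

lemma frechet_subdiff_add_differentiable:
  fixes G :: "'a::real_inner \<Rightarrow> real"
  assumes v: "v \<in> frechet_subdiff (\<lambda>y. h y + ereal (G y)) x"
    and G: "(G has_derivative (\<lambda>d. q \<bullet> d)) (at x)"
  shows "v - q \<in> frechet_subdiff h x"
  unfolding frechet_subdiff_def
proof (intro CollectI conjI allI impI)
  obtain a where a: "h x = ereal a"
    using frechet_subdiff_finite[OF v] by (cases "h x") auto
  then show "\<bar>h x\<bar> \<noteq> \<infinity>"
    by simp
  fix \<epsilon> :: real assume "\<epsilon> > 0"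
  then have \<epsilon>: "\<epsilon> / 2 > 0"
    by simp
  have "\<forall>\<^sub>F y in at x. h x + ereal (G x) + ereal (v \<bullet> (y - x) - \<epsilon> / 2 * norm (y - x)) \<le> h y + ereal (G y)"
    using v \<epsilon> unfolding frechet_subdiff_def mem_Collect_eq by blast
  with has_derivative_inner_approx[OF G \<epsilon>]
  show "\<forall>\<^sub>F y in at x. h x + ereal ((v - q) \<bullet> (y - x) - \<epsilon> * norm (y - x)) \<le> h y"
  proof eventually_elim
    case (elim y)
    show ?case
    proof (cases "h y")
      case (real b)
      then have "a + G x + (v \<bullet> (y - x) - \<epsilon> / 2 * norm (y - x)) \<le> b + G y"
        using elim(2) a by simp
      moreover have "G y - G x - q \<bullet> (y - x) \<le> \<epsilon> / 2 * norm (y - x)"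
        using elim(1) abs_ge_self order_trans by blast
      ultimately show ?thesis
        using a real by (simp add: inner_diff_left)
    qed (use elim(2) a in simp_all)
  qed
qed

lemma frechet_subdiff_Pair:
  fixes F :: "'a::real_inner \<times> 'b::real_inner \<Rightarrow> ereal"
  assumes "(a, b) \<in> frechet_subdiff F (x, y)"
  shows "a \<in> frechet_subdiff (\<lambda>x'. F (x', y)) x" and "b \<in> frechet_subdiff (\<lambda>y'. F (x, y')) y"
proof -
  have sub: "\<forall>\<^sub>F z in at (x, y). F (x, y) + ereal ((a, b) \<bullet> (z - (x, y)) - \<epsilon> * norm (z - (x, y))) \<le> F z"
    if "\<epsilon> > 0" for \<epsilon>
    using assms that by (simp add: frechet_subdiff_def)
  have "filterlim (\<lambda>x'. (x', y)) (at (x, y)) (at x)" "filterlim (\<lambda>y'. (x, y')) (at (x, y)) (at y)"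
    by (auto intro!: filterlim_atI tendsto_eq_intros simp: eventually_at_filter)
  from this[THEN filterlim_iff[THEN iffD1], rule_format, OF sub]
  show "a \<in> frechet_subdiff (\<lambda>x'. F (x', y)) x" "b \<in> frechet_subdiff (\<lambda>y'. F (x, y')) y"
    using assms by (simp_all add: frechet_subdiff_def norm_Pair)
qed

section \<open>The p-th power of the norm\<close>

definition grad_pnorm :: "real \<Rightarrow> real \<Rightarrow> 'a::real_inner \<Rightarrow> 'a" where
  "grad_pnorm p \<gamma> z = (norm z powr (p - 2) / \<gamma>) *\<^sub>R z"

lemma grad_pnorm_zero [simp]: "grad_pnorm p \<gamma> 0 = 0"
  by (simp add: grad_pnorm_def)

lemma has_derivative_norm_powr:
  fixes z :: "'a::real_inner"
  assumes p: "p > 1"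
  shows "((\<lambda>z. norm z powr p) has_derivative (\<lambda>d. ((p * norm z powr (p - 2)) *\<^sub>R z) \<bullet> d)) (at z)"
proof (cases "z = 0")
  case False
  then have n: "norm z > 0"
    by simp
  have "((\<lambda>t::real. t powr p) has_real_derivative p * norm z powr (p - 1)) (at (norm z))"
    using n by (auto intro!: derivative_eq_intros)
  from has_derivative_compose[OF has_derivative_norm[OF False] this[unfolded has_field_derivative_def]]
  have "((\<lambda>z. norm z powr p) has_derivative (\<lambda>d. (p * norm z powr (p - 1)) * (sgn z \<bullet> d))) (at z)"
    by (simp add: mult.commute o_def inner_commute)
  moreover have "norm z powr (p - 1) = norm z powr (p - 2) * norm z"
    using n by (simp add: powr_diff power2_eq_square)
  then have "(p * norm z powr (p - 1)) * (sgn z \<bullet> d) = ((p * norm z powr (p - 2)) *\<^sub>R z) \<bullet> d" for d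
    using n by (simp add: sgn_div_norm field_simps)
  ultimately show ?thesis
    by simp
next
  case True
  have "((\<lambda>y. norm y powr (p - 1)) \<longlongrightarrow> 0) (at (0::'a))"
    using p by (intro tendsto_zero_powrI tendsto_norm_zero tendsto_ident_at) auto
  then have "((\<lambda>y. (norm y powr p - norm 0 powr p - 0) /\<^sub>R norm (y - 0)) \<longlongrightarrow> 0) (at (0::'a))"
    by (rule Lim_transform_eventually)
      (auto simp: eventually_at_filter powr_diff divide_inverse mult.commute)
  then have "((\<lambda>z. norm z powr p) has_derivative (\<lambda>d. 0)) (at (0::'a))"
    by (simp add: has_derivative_at_within bounded_linear_zero)
  then show ?thesis
    using True by simp
qed

lemma has_derivative_pnorm:
  fixes z :: "'a::real_inner"
  assumes "p > 1"
  shows "((\<lambda>z. norm z powr p / (p * \<gamma>)) has_derivative (\<lambda>d. grad_pnorm p \<gamma> z \<bullet> d)) (at z)"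
proof -
  have "((\<lambda>z. 1 / (p * \<gamma>) * norm z powr p) has_derivative
      (\<lambda>d. 1 / (p * \<gamma>) * (((p * norm z powr (p - 2)) *\<^sub>R z) \<bullet> d))) (at z)"
    by (rule has_derivative_mult_right[OF has_derivative_norm_powr[OF assms]])
  moreover have "1 / (p * \<gamma>) * (((p * norm z powr (p - 2)) *\<^sub>R z) \<bullet> d) = grad_pnorm p \<gamma> z \<bullet> d" for d
    using assms by (simp add: grad_pnorm_def)
  ultimately show ?thesis
    by simp
qed

lemma has_derivative_pnorm_diff_left:
  fixes x y :: "'a::real_inner"
  assumes "p > 1"
  shows "((\<lambda>x. norm (x - y) powr p / (p * \<gamma>)) has_derivative (\<lambda>d. grad_pnorm p \<gamma> (x - y) \<bullet> d)) (at x)"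
  using has_derivative_compose[OF has_derivative_diff[OF has_derivative_ident has_derivative_const]
      has_derivative_pnorm[OF assms]]
  by (simp add: o_def)

lemma has_derivative_pnorm_diff_right:
  fixes x y :: "'a::real_inner"
  assumes "p > 1"
  shows "((\<lambda>y. norm (x - y) powr p / (p * \<gamma>)) has_derivative (\<lambda>d. (- grad_pnorm p \<gamma> (x - y)) \<bullet> d)) (at y)"
  using has_derivative_compose[OF has_derivative_diff[OF has_derivative_const has_derivative_ident]
      has_derivative_pnorm[OF assms]]
  by (simp add: o_def)

lemma norm_grad_pnorm: "norm (grad_pnorm p \<gamma> z) = norm z powr (p - 1) / \<bar>\<gamma>\<bar>"
proof (cases "z = 0")
  case False
  then have "norm z powr (p - 2) * norm z = norm z powr (p - 1)"
    by (simp add: powr_diff power2_eq_square)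
  then show ?thesis
    by (simp add: grad_pnorm_def)
qed simp

lemma isCont_grad_pnorm:
  fixes z :: "'a::real_inner"
  assumes p: "p > 1"
  shows "isCont (grad_pnorm p \<gamma>) z"
proof (cases "z = 0")
  case False
  then show ?thesis
    unfolding grad_pnorm_def divide_inverse by (intro continuous_intros) auto
next
  case True
  have "((\<lambda>y. norm y powr (p - 1) / \<bar>\<gamma>\<bar>) \<longlongrightarrow> 0) (at (0::'a))"
    using p by (intro tendsto_zero_powrI tendsto_norm_zero tendsto_ident_at tendsto_divide_zero) auto
  then have "((\<lambda>y. norm (grad_pnorm p \<gamma> y)) \<longlongrightarrow> 0) (at (0::'a))"
    by (simp add: norm_grad_pnorm)
  then have "(grad_pnorm p \<gamma> \<longlongrightarrow> 0) (at (0::'a))"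
    by (rule tendsto_norm_zero_cancel)
  then show ?thesis
    using True unfolding isCont_def by simp
qed

lemma tendsto_zero_of_grad_pnorm:
  fixes zs :: "nat \<Rightarrow> 'a::real_inner"
  assumes p: "p > 1" and \<gamma>: "\<gamma> > 0" and lim: "(\<lambda>k. grad_pnorm p \<gamma> (zs k)) \<longlonglongrightarrow> 0"
  shows "zs \<longlonglongrightarrow> 0"
proof -
  have "(\<lambda>k. \<gamma> * norm (grad_pnorm p \<gamma> (zs k))) \<longlonglongrightarrow> 0"
    using tendsto_norm_zero[OF lim] by (rule tendsto_mult_right_zero)
  then have "(\<lambda>k. (\<gamma> * norm (grad_pnorm p \<gamma> (zs k))) powr (1 / (p - 1))) \<longlonglongrightarrow> 0"
    by (rule tendsto_zero_powrI[OF _ tendsto_const]) (use p \<gamma> in auto)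
  moreover have "(\<gamma> * norm (grad_pnorm p \<gamma> (zs k))) powr (1 / (p - 1)) = norm (zs k)" for k
    using p \<gamma> by (simp add: norm_grad_pnorm powr_powr)
  ultimately show ?thesis
    by (simp add: tendsto_norm_zero_iff)
qed

section \<open>The coupling function\<close>

definition moreau_coupling :: "('a::real_normed_vector \<Rightarrow> ereal) \<Rightarrow> real \<Rightarrow> real \<Rightarrow> 'a \<times> 'a \<Rightarrow> ereal" where
  "moreau_coupling \<phi> p \<gamma> = (\<lambda>(x, y). \<phi> y + ereal (norm (x - y) powr p / (p * \<gamma>)))"

lemma moreau_coupling_Pair [simp]:
  "moreau_coupling \<phi> p \<gamma> (x, y) = \<phi> y + ereal (norm (x - y) powr p / (p * \<gamma>))"
  by (simp add: moreau_coupling_def)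

lemma frechet_subdiff_moreau_coupling:
  fixes \<phi> :: "'a::real_inner \<Rightarrow> ereal"
  assumes p: "p > 1" and ab: "(a, b) \<in> frechet_subdiff (moreau_coupling \<phi> p \<gamma>) (x, y)"
  shows "a = grad_pnorm p \<gamma> (x - y)" and "b + grad_pnorm p \<gamma> (x - y) \<in> frechet_subdiff \<phi> y"
proof -
  obtain c where c: "\<phi> y = ereal c"
    using frechet_subdiff_finite[OF ab] by (cases "\<phi> y") auto
  have "a \<in> frechet_subdiff (\<lambda>x'. ereal (c + norm (x' - y) powr p / (p * \<gamma>))) x"
    using frechet_subdiff_Pair(1)[OF ab] by (simp add: c)
  moreover have "((\<lambda>x'. c + norm (x' - y) powr p / (p * \<gamma>)) has_derivative
      (\<lambda>d. grad_pnorm p \<gamma> (x - y) \<bullet> d)) (at x)"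
    using has_derivative_add[OF has_derivative_const has_derivative_pnorm_diff_left[OF p]] by simp
  ultimately show "a = grad_pnorm p \<gamma> (x - y)"
    by (rule frechet_subdiff_differentiable)
  have "b \<in> frechet_subdiff (\<lambda>y'. \<phi> y' + ereal (norm (x - y') powr p / (p * \<gamma>))) y"
    using frechet_subdiff_Pair(2)[OF ab] by simp
  then have "b - (- grad_pnorm p \<gamma> (x - y)) \<in> frechet_subdiff \<phi> y"
    using has_derivative_pnorm_diff_right[OF p] by (rule frechet_subdiff_add_differentiable)
  then show "b + grad_pnorm p \<gamma> (x - y) \<in> frechet_subdiff \<phi> y"
    by simp
qed

lemma limiting_subdiff_moreau_coupling:
  fixes \<phi> :: "'a::real_inner \<Rightarrow> ereal"
  assumes p: "p > 1" and ab: "(a, b) \<in> limiting_subdiff (moreau_coupling \<phi> p \<gamma>) (x, y)"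
  shows "a = grad_pnorm p \<gamma> (x - y)" and "b + grad_pnorm p \<gamma> (x - y) \<in> limiting_subdiff \<phi> y"
proof -
  let ?N = "\<lambda>z. norm z powr p / (p * \<gamma>)"
  obtain zs vs where fin: "\<bar>moreau_coupling \<phi> p \<gamma> (x, y)\<bar> \<noteq> \<infinity>" and zs: "zs \<longlonglongrightarrow> (x, y)"
    and val: "(\<lambda>k. moreau_coupling \<phi> p \<gamma> (zs k)) \<longlonglongrightarrow> moreau_coupling \<phi> p \<gamma> (x, y)"
    and vs: "\<And>k. vs k \<in> frechet_subdiff (moreau_coupling \<phi> p \<gamma>) (zs k)" and vs_lim: "vs \<longlonglongrightarrow> (a, b)"
    using limiting_subdiffE[OF ab] by blast
  define X Y A B where "X k = fst (zs k)" and "Y k = snd (zs k)"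
    and "A k = fst (vs k)" and "B k = snd (vs k)" for k
  have XY: "(\<lambda>k. X k - Y k) \<longlonglongrightarrow> x - y" and Y: "Y \<longlonglongrightarrow> y"
    using tendsto_fst[OF zs] tendsto_snd[OF zs] unfolding X_def Y_def by (auto intro: tendsto_diff)
  have A: "A \<longlonglongrightarrow> a" and B: "B \<longlonglongrightarrow> b"
    using tendsto_fst[OF vs_lim] tendsto_snd[OF vs_lim] by (simp_all add: A_def[abs_def] B_def[abs_def])
  have "(A k, B k) \<in> frechet_subdiff (moreau_coupling \<phi> p \<gamma>) (X k, Y k)" for k
    using vs[of k] by (simp add: X_def Y_def A_def B_def)
  then have sub: "A k = grad_pnorm p \<gamma> (X k - Y k)"
      "B k + grad_pnorm p \<gamma> (X k - Y k) \<in> frechet_subdiff \<phi> (Y k)" for k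
    using frechet_subdiff_moreau_coupling[OF p] by blast+
  have grad_lim: "(\<lambda>k. grad_pnorm p \<gamma> (X k - Y k)) \<longlonglongrightarrow> grad_pnorm p \<gamma> (x - y)"
    by (rule isCont_tendsto_compose[OF isCont_grad_pnorm[OF p] XY])
  with A show a: "a = grad_pnorm p \<gamma> (x - y)"
    unfolding sub(1)[abs_def] by (rule LIMSEQ_unique)
  have "\<bar>\<phi> y\<bar> \<noteq> \<infinity>"
    using fin by (cases "\<phi> y") auto
  moreover have "(\<lambda>k. \<phi> (Y k)) \<longlonglongrightarrow> \<phi> y"
  proof (rule tendsto_ereal_add_real_cancel)
    show "(\<lambda>k. \<phi> (Y k) + ereal (?N (X k - Y k))) \<longlonglongrightarrow> \<phi> y + ereal (?N (x - y))"
      using val by (simp add: X_def Y_def moreau_coupling_def case_prod_beta)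
    show "(\<lambda>k. ?N (X k - Y k)) \<longlonglongrightarrow> ?N (x - y)"
      using isCont_tendsto_compose[OF has_derivative_continuous[OF has_derivative_pnorm[OF p]] XY] .
  qed
  moreover have "(\<lambda>k. B k + grad_pnorm p \<gamma> (X k - Y k)) \<longlonglongrightarrow> b + grad_pnorm p \<gamma> (x - y)"
    using B grad_lim by (rule tendsto_add)
  ultimately show "b + grad_pnorm p \<gamma> (x - y) \<in> limiting_subdiff \<phi> y"
    using Y sub(2) by (intro limiting_subdiffI[where xs = Y])
qed

section \<open>Adding a small power of a distance to a KL function\<close>

lemma abs_add_powr_le:
  fixes a b \<theta> :: real
  assumes "0 \<le> \<theta>" "\<theta> \<le> 1"
  shows "\<bar>a + b\<bar> powr \<theta> \<le> 2 * (\<bar>a\<bar> powr \<theta> + \<bar>b\<bar> powr \<theta>)"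
proof -
  have "\<bar>a + b\<bar> powr \<theta> \<le> (2 * max \<bar>a\<bar> \<bar>b\<bar>) powr \<theta>"
    using assms by (intro powr_mono2) auto
  also have "\<dots> = 2 powr \<theta> * max \<bar>a\<bar> \<bar>b\<bar> powr \<theta>"
    by (simp add: powr_mult)
  also have "\<dots> \<le> 2 * max \<bar>a\<bar> \<bar>b\<bar> powr \<theta>"
    using assms powr_mono[of \<theta> 1 2] by (intro mult_right_mono) auto
  also have "max \<bar>a\<bar> \<bar>b\<bar> powr \<theta> \<le> \<bar>a\<bar> powr \<theta> + \<bar>b\<bar> powr \<theta>"
    by (simp add: max_def)
  finally show ?thesis
    by simp
qed

lemma powr_pnorm_le:
  fixes s c p \<theta> :: real
  assumes "0 \<le> s" "s \<le> 1" "c > 0" "0 \<le> \<theta>" "p - 1 \<le> p * \<theta>"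
  shows "(s powr p / c) powr \<theta> \<le> c powr (- \<theta>) * s powr (p - 1)"
proof -
  have "(s powr p / c) powr \<theta> = (s powr p) powr \<theta> / c powr \<theta>"
    by (rule powr_divide)
  also have "\<dots> = c powr (- \<theta>) * s powr (p * \<theta>)"
    by (simp add: powr_powr powr_minus divide_inverse mult.commute)
  also have "s powr (p * \<theta>) \<le> s powr (p - 1)"
    using assms by (intro powr_mono') auto
  finally show ?thesis
    using assms(3) by (simp add: mult_left_mono)
qed

text \<open>The condition \<open>\<theta> \<ge> (p - 1) / p\<close> is what makes the perturbation \<open>(s\<^sup>p)\<^sup>\<theta>\<close> dominated by
  \<open>s\<^sup>p\<^sup>-\<^sup>1\<close>, the size of its gradient, for small s.\<close>

lemma lojasiewicz_ineq_perturbed: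
  fixes \<phi> :: "'a::real_inner \<Rightarrow> ereal"
  assumes loj: "lojasiewicz_ineq \<phi> yb \<theta> K r \<eta>" and K: "K > 0" and \<theta>: "0 \<le> \<theta>" "\<theta> \<le> 1"
    and p: "p > 1" and \<gamma>: "\<gamma> > 0" and p\<theta>: "p - 1 \<le> p * \<theta>"
    and g: "g \<in> limiting_subdiff \<phi> y" and y: "dist y yb \<le> r"
    and val: "\<phi> yb = ereal b" "\<phi> y = ereal (b + a)" "\<bar>a\<bar> < \<eta>" and s: "0 \<le> s" "s \<le> 1"
  shows "\<bar>a + s powr p / (p * \<gamma>)\<bar> powr \<theta>
    \<le> 2 * max K (\<gamma> * (p * \<gamma>) powr (- \<theta>)) * (norm g + s powr (p - 1) / \<gamma>)"
proof -
  define C where "C = \<gamma> * (p * \<gamma>) powr (- \<theta>)"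
  have "\<bar>a\<bar> powr \<theta> \<le> K * norm g"
  proof (cases "a = 0")
    case False
    have "y \<in> cball yb r \<inter> dom_subdiff \<phi>"
      using g y by (auto simp: dom_subdiff_def dist_commute)
    with loj have "0 < \<bar>\<phi> y - \<phi> yb\<bar> \<and> \<bar>\<phi> y - \<phi> yb\<bar> < ereal \<eta> \<longrightarrow>
        real_of_ereal \<bar>\<phi> y - \<phi> yb\<bar> powr \<theta> \<le> K * infdist 0 (limiting_subdiff \<phi> y)"
      unfolding lojasiewicz_ineq_def by blast
    then have "\<bar>a\<bar> powr \<theta> \<le> K * infdist 0 (limiting_subdiff \<phi> y)"
      using val False by simp
    also have "\<dots> \<le> K * norm g"
      using K infdist_le[OF g, of 0] by simp
    finally show ?thesis .
  qed (use K in simp)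
  moreover have "\<bar>s powr p / (p * \<gamma>)\<bar> powr \<theta> \<le> C * (s powr (p - 1) / \<gamma>)"
    unfolding C_def using p \<gamma> p\<theta> \<theta> s by (simp add: powr_pnorm_le)
  ultimately have "\<bar>a + s powr p / (p * \<gamma>)\<bar> powr \<theta> \<le> 2 * (K * norm g + C * (s powr (p - 1) / \<gamma>))"
    using abs_add_powr_le[of \<theta> a "s powr p / (p * \<gamma>)"] \<theta> by simp
  also have "\<dots> \<le> 2 * (max K C * norm g + max K C * (s powr (p - 1) / \<gamma>))"
    using \<gamma> by (intro mult_left_mono add_mono mult_right_mono) auto
  finally show ?thesis
    by (simp add: C_def distrib_left)
qed

lemma KL_exponent_at_perturbed_eventually:
  fixes \<phi> :: "'a::real_inner \<Rightarrow> ereal"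
  assumes KL: "KL_exponent_at \<phi> yb \<theta>" and p: "p > 1" and \<gamma>: "\<gamma> > 0" and \<theta>: "(p - 1) / p \<le> \<theta>"
    and ys: "ys \<longlonglongrightarrow> yb" and s: "s \<longlonglongrightarrow> 0" "\<And>k. 0 \<le> s k"
    and g: "\<And>k. g k \<in> limiting_subdiff \<phi> (ys k)"
    and val: "(\<lambda>k. \<phi> (ys k) + ereal (s k powr p / (p * \<gamma>))) \<longlonglongrightarrow> \<phi> yb"
  shows "\<exists>K>0. \<forall>\<^sub>F k in sequentially.
    real_of_ereal \<bar>\<phi> (ys k) + ereal (s k powr p / (p * \<gamma>)) - \<phi> yb\<bar> powr \<theta>
      \<le> K * (norm (g k) + s k powr (p - 1) / \<gamma>)"
proof -
  obtain K r \<eta> where K: "K > 0" and r: "r > 0" and \<eta>: "\<eta> > 0" and loj: "lojasiewicz_ineq \<phi> yb \<theta> K r \<eta>"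
    using KL by (rule KL_exponent_atE_lojasiewicz)
  have \<theta>': "0 \<le> \<theta>" "\<theta> \<le> 1" and p\<theta>: "p - 1 \<le> p * \<theta>"
    using \<theta> p KL by (auto simp: field_simps KL_exponent_at_def)
  have "yb \<in> dom_subdiff \<phi>"
    using KL by (simp add: KL_exponent_at_def)
  then obtain b where b: "\<phi> yb = ereal b"
    using dom_subdiff_finite[of yb \<phi>] by (cases "\<phi> yb") auto
  have "\<exists>a. \<phi> (ys k) = ereal (b + a)" for k
    using limiting_subdiff_finite[OF g[of k]] by (cases "\<phi> (ys k)") (auto intro: exI[of _ "_ - b"])
  then obtain a where a: "\<And>k. \<phi> (ys k) = ereal (b + a k)"
    by metis
  have N: "(\<lambda>k. s k powr p / (p * \<gamma>)) \<longlonglongrightarrow> 0"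
    using p s by (intro tendsto_divide_zero tendsto_zero_powrI[OF _ tendsto_const]) auto
  have "(\<lambda>k. b + a k + s k powr p / (p * \<gamma>)) \<longlonglongrightarrow> b"
    using val by (simp add: a b)
  from tendsto_diff[OF this N] have "a \<longlonglongrightarrow> 0"
    using tendsto_add_const_iff[of b a 0] by simp
  then have "\<forall>\<^sub>F k in sequentially. \<bar>a k\<bar> < \<eta>"
    using \<eta> by (auto simp: tendsto_iff dist_real_def)
  moreover have "\<forall>\<^sub>F k in sequentially. dist (ys k) yb \<le> r"
    using ys r by (auto simp: tendsto_iff elim!: allE[of _ r] eventually_mono)
  moreover have "\<forall>\<^sub>F k in sequentially. s k \<le> 1"
    using s(1) by (auto simp: tendsto_iff dist_real_def elim!: allE[of _ 1] eventually_mono)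
  ultimately have "\<forall>\<^sub>F k in sequentially. \<bar>a k + s k powr p / (p * \<gamma>)\<bar> powr \<theta>
      \<le> 2 * max K (\<gamma> * (p * \<gamma>) powr (- \<theta>)) * (norm (g k) + s k powr (p - 1) / \<gamma>)"
  proof eventually_elim
    case (elim k)
    show ?case
      by (rule lojasiewicz_ineq_perturbed[OF loj K \<theta>' p \<gamma> p\<theta> g elim(2) b a elim(1) s(2) elim(3)])
  qed
  moreover have "real_of_ereal \<bar>\<phi> (ys k) + ereal (s k powr p / (p * \<gamma>)) - \<phi> yb\<bar>
      = \<bar>a k + s k powr p / (p * \<gamma>)\<bar>" for k
    by (simp add: a b)
  ultimately show ?thesis
    using K by (intro exI[of _ "2 * max K (\<gamma> * (p * \<gamma>) powr (- \<theta>))"]) auto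
qed

lemma moreau_coupling_vanishing_subgradients:
  fixes \<phi> :: "'a::real_inner \<Rightarrow> ereal"
  assumes p: "p > 1" and \<gamma>: "\<gamma> > 0" and zs: "zs \<longlonglongrightarrow> (xb, yb)"
    and us: "\<And>k. us k \<in> limiting_subdiff (moreau_coupling \<phi> p \<gamma>) (zs k)" and us_lim: "us \<longlonglongrightarrow> 0"
  shows "(\<lambda>k. fst (zs k) - snd (zs k)) \<longlonglongrightarrow> 0" and "xb = yb"
proof -
  have "fst (us k) = grad_pnorm p \<gamma> (fst (zs k) - snd (zs k))" for k
    using limiting_subdiff_moreau_coupling(1)[OF p, of "fst (us k)" "snd (us k)" \<phi> \<gamma> "fst (zs k)" "snd (zs k)"]
      us[of k] by simp
  then have "(\<lambda>k. grad_pnorm p \<gamma> (fst (zs k) - snd (zs k))) \<longlonglongrightarrow> 0"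
    using tendsto_fst[OF us_lim] by simp
  then show diff: "(\<lambda>k. fst (zs k) - snd (zs k)) \<longlonglongrightarrow> 0"
    by (rule tendsto_zero_of_grad_pnorm[OF p \<gamma>])
  have "(\<lambda>k. fst (zs k) - snd (zs k)) \<longlonglongrightarrow> xb - yb"
    using tendsto_fst[OF zs] tendsto_snd[OF zs] by (auto intro: tendsto_diff)
  with diff show "xb = yb"
    using LIMSEQ_unique by fastforce
qed

lemma dom_subdiff_moreau_coupling:
  fixes \<phi> :: "'a::real_inner \<Rightarrow> ereal"
  assumes "p > 1" "(x, y) \<in> dom_subdiff (moreau_coupling \<phi> p \<gamma>)"
  shows "y \<in> dom_subdiff \<phi>"
proof -
  obtain a b where "(a, b) \<in> limiting_subdiff (moreau_coupling \<phi> p \<gamma>) (x, y)"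
    using assms(2) by (auto simp: dom_subdiff_def)
  then have "b + grad_pnorm p \<gamma> (x - y) \<in> limiting_subdiff \<phi> y"
    by (rule limiting_subdiff_moreau_coupling(2)[OF assms(1)])
  then show ?thesis
    by (auto simp: dom_subdiff_def)
qed

lemma norm_snd_add_fst_le: "norm (snd u + fst u) + norm (fst u) \<le> 3 * norm u"
  using norm_triangle_ineq[of "snd u" "fst u"] norm_fst_le[of "fst u" "snd u"] norm_snd_le[of "snd u" "fst u"]
  by simp

lemma KL_exponent_moreau_coupling:
  fixes \<phi> :: "'a::real_inner \<Rightarrow> ereal"
  assumes p: "p > 1" and \<gamma>: "\<gamma> > 0" and \<theta>: "(p - 1) / p \<le> \<theta>" "\<theta> < 1"
    and KL: "KL_exponent \<phi> \<theta>"
  shows "KL_exponent (moreau_coupling \<phi> p \<gamma>) \<theta>"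
  unfolding KL_exponent_def
proof (intro ballI)
  let ?\<Phi> = "moreau_coupling \<phi> p \<gamma>"
  fix zb assume zb: "zb \<in> dom_subdiff ?\<Phi>"
  obtain xb yb where zb_eq: "zb = (xb, yb)"
    by fastforce
  have KL_yb: "KL_exponent_at \<phi> yb \<theta>"
    using KL dom_subdiff_moreau_coupling[OF p zb[unfolded zb_eq]] by (simp add: KL_exponent_def)
  show "KL_exponent_at ?\<Phi> zb \<theta>"
  proof (rule KL_exponent_atI_sequentially)
    show "0 \<le> \<theta>" "\<theta> < 1" "zb \<in> dom_subdiff ?\<Phi>"
      using \<theta> zb p by (simp_all add: order.trans[OF _ \<theta>(1)])
    fix zs us
    assume zs: "zs \<longlonglongrightarrow> zb" and val: "(\<lambda>k. ?\<Phi> (zs k)) \<longlonglongrightarrow> ?\<Phi> zb"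
      and us: "\<And>k. us k \<in> limiting_subdiff ?\<Phi> (zs k)" and us_lim: "us \<longlonglongrightarrow> 0"
    note vanish = moreau_coupling_vanishing_subgradients[OF p \<gamma> zs[unfolded zb_eq] us us_lim]
    define s where "s k = norm (fst (zs k) - snd (zs k))" for k
    define g where "g k = snd (us k) + fst (us k)" for k
    have "(fst (us k), snd (us k)) \<in> limiting_subdiff ?\<Phi> (fst (zs k), snd (zs k))" for k
      using us[of k] by simp
    note sub = limiting_subdiff_moreau_coupling[OF p this]
    have grad: "fst (us k) = grad_pnorm p \<gamma> (fst (zs k) - snd (zs k))"
      and g: "g k \<in> limiting_subdiff \<phi> (snd (zs k))" for k
      using sub[of k] by (simp_all add: g_def)
    have val_eq: "?\<Phi> (zs k) = \<phi> (snd (zs k)) + ereal (s k powr p / (p * \<gamma>))" for k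
      by (simp add: s_def moreau_coupling_def case_prod_beta)
    have zb_val: "?\<Phi> zb = \<phi> yb"
      by (simp add: zb_eq vanish(2))
    have ys: "(\<lambda>k. snd (zs k)) \<longlonglongrightarrow> yb"
      using tendsto_snd[OF zs] by (simp add: zb_eq)
    have s: "s \<longlonglongrightarrow> 0" "\<And>k. 0 \<le> s k"
      using tendsto_norm_zero[OF vanish(1)] by (simp_all add: s_def[abs_def])
    have "(\<lambda>k. \<phi> (snd (zs k)) + ereal (s k powr p / (p * \<gamma>))) \<longlonglongrightarrow> \<phi> yb"
      using val by (simp only: val_eq zb_val)
    then obtain K where "K > 0" and K: "\<forall>\<^sub>F k in sequentially.
        real_of_ereal \<bar>\<phi> (snd (zs k)) + ereal (s k powr p / (p * \<gamma>)) - \<phi> yb\<bar> powr \<theta>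
          \<le> K * (norm (g k) + s k powr (p - 1) / \<gamma>)"
      using KL_exponent_at_perturbed_eventually[OF KL_yb p \<gamma> \<theta>(1) ys s g] by blast
    have "norm (fst (us k)) = s k powr (p - 1) / \<gamma>" for k
      using \<gamma> by (simp add: grad s_def norm_grad_pnorm)
    then have bound: "norm (g k) + s k powr (p - 1) / \<gamma> \<le> 3 * norm (us k)" for k
      using norm_snd_add_fst_le[of "us k"] by (simp add: g_def)
    from K have "\<forall>\<^sub>F k in sequentially. real_of_ereal \<bar>?\<Phi> (zs k) - ?\<Phi> zb\<bar> powr \<theta> \<le> 3 * K * norm (us k)"
    proof eventually_elim
      case (elim k)
      have "K * (norm (g k) + s k powr (p - 1) / \<gamma>) \<le> K * (3 * norm (us k))"
        using bound[of k] \<open>K > 0\<close> by (intro mult_left_mono) auto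
      with elim show ?case
        by (simp only: val_eq zb_val mult.assoc)
    qed
    then show "\<exists>K. \<forall>\<^sub>F k in sequentially. real_of_ereal \<bar>?\<Phi> (zs k) - ?\<Phi> zb\<bar> powr \<theta> \<le> K * norm (us k)"
      by blast
  qed
qed

section \<open>The high-order Moreau envelope\<close>

definition hprox :: "('a::real_normed_vector \<Rightarrow> ereal) \<Rightarrow> real \<Rightarrow> real \<Rightarrow> 'a \<Rightarrow> 'a set" where
  "hprox \<phi> p \<gamma> x = {y. \<phi> y + ereal (norm (x - y) powr p / (p * \<gamma>)) = hmoreau \<phi> p \<gamma> x}"

lemma hmoreau_le: "hmoreau \<phi> p \<gamma> x \<le> \<phi> y + ereal (norm (x - y) powr p / (p * \<gamma>))"
  unfolding hmoreau_def by (rule INF_lower) simp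

lemma frechet_subdiff_hmoreau:
  fixes \<phi> :: "'a::real_inner \<Rightarrow> ereal"
  assumes p: "p > 1" and v: "v \<in> frechet_subdiff (hmoreau \<phi> p \<gamma>) x" and y: "y \<in> hprox \<phi> p \<gamma> x"
  shows "v = grad_pnorm p \<gamma> (x - y)"
proof -
  obtain c where c: "\<phi> y = ereal c"
    using y frechet_subdiff_finite[OF v] by (cases "\<phi> y") (auto simp: hprox_def)
  have "v \<in> frechet_subdiff (\<lambda>x'. ereal (c + norm (x' - y) powr p / (p * \<gamma>))) x"
  proof (rule frechet_subdiff_touching[OF v])
    show "\<forall>\<^sub>F x' in at x. hmoreau \<phi> p \<gamma> x' \<le> ereal (c + norm (x' - y) powr p / (p * \<gamma>))"
      using hmoreau_le[of \<phi> p \<gamma> _ y] by (simp add: c)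
    show "hmoreau \<phi> p \<gamma> x = ereal (c + norm (x - y) powr p / (p * \<gamma>))"
      using y by (simp add: hprox_def c)
  qed
  moreover have "((\<lambda>x'. c + norm (x' - y) powr p / (p * \<gamma>)) has_derivative
      (\<lambda>d. grad_pnorm p \<gamma> (x - y) \<bullet> d)) (at x)"
    using has_derivative_add[OF has_derivative_const has_derivative_pnorm_diff_left[OF p]] by simp
  ultimately show ?thesis
    by (rule frechet_subdiff_differentiable)
qed

lemma grad_pnorm_frechet_subdiff_hprox:
  fixes \<phi> :: "'a::real_inner \<Rightarrow> ereal"
  assumes p: "p > 1" and y: "y \<in> hprox \<phi> p \<gamma> x" and fin: "\<bar>hmoreau \<phi> p \<gamma> x\<bar> \<noteq> \<infinity>"
  shows "grad_pnorm p \<gamma> (x - y) \<in> frechet_subdiff \<phi> y"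
proof -
  have "0 \<in> frechet_subdiff (\<lambda>y'. \<phi> y' + ereal (norm (x - y') powr p / (p * \<gamma>))) y"
    using y fin hmoreau_le[of \<phi> p \<gamma> x] by (intro zero_frechet_subdiff_minimum) (auto simp: hprox_def)
  then have "0 - (- grad_pnorm p \<gamma> (x - y)) \<in> frechet_subdiff \<phi> y"
    using has_derivative_pnorm_diff_right[OF p] by (rule frechet_subdiff_add_differentiable)
  then show ?thesis
    by simp
qed

lemma lsc_fun_tendsto_le:
  fixes \<phi> :: "'a::topological_space \<Rightarrow> ereal"
  assumes lsc: "lsc_fun \<phi>" and ys: "ys \<longlonglongrightarrow> y" and lim: "(\<lambda>k. \<phi> (ys k)) \<longlonglongrightarrow> L"
  shows "\<phi> y \<le> L"
proof (rule ccontr)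
  assume "\<not> \<phi> y \<le> L"
  then obtain c where c: "L < c" "c < \<phi> y"
    using dense[of L "\<phi> y"] by (auto simp: not_le)
  then have "c < Liminf (at y) \<phi>"
    using lsc unfolding lsc_fun_def by (blast intro: less_le_trans)
  then have "\<forall>\<^sub>F z in at y. c < \<phi> z"
    by (rule less_LiminfD)
  then have "\<forall>\<^sub>F z in nhds y. c < \<phi> z"
    using c(2) by (auto simp: eventually_at_filter elim: eventually_mono)
  then have "\<forall>\<^sub>F k in sequentially. c < \<phi> (ys k)"
    by (rule filterlim_iff[THEN iffD1, OF ys, rule_format])
  moreover have "\<forall>\<^sub>F k in sequentially. \<phi> (ys k) < c"
    using lim c(1) by (rule order_tendstoD(2))
  ultimately have "\<forall>\<^sub>F k in sequentially. False"
    by eventually_elim simp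
  then show False
    by simp
qed

text \<open>\<open>\<gamma>\<^sub>1\<close> and \<open>x\<^sub>0\<close> witness that \<open>\<gamma>\<close> lies below the prox-boundedness threshold.\<close>

locale hmoreau_below_threshold =
  fixes \<phi> :: "'a::euclidean_space \<Rightarrow> ereal" and p \<gamma> \<gamma>\<^sub>1 :: real and x\<^sub>0 :: 'a
  assumes p: "p > 1" and \<gamma>: "0 < \<gamma>" "\<gamma> < \<gamma>\<^sub>1"
    and proper: "proper_fun \<phi>" and lsc: "lsc_fun \<phi>"
    and bounded_at: "hmoreau \<phi> p \<gamma>\<^sub>1 x\<^sub>0 > -\<infinity>"
begin

lemma not_MInfty: "\<phi> y \<noteq> -\<infinity>"
  using proper by (simp add: proper_fun_def)

lemma hmoreau_less_PInfty: "hmoreau \<phi> p \<gamma>' x < \<infinity>"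
proof -
  obtain y where "\<phi> y \<noteq> \<infinity>"
    using proper by (auto simp: proper_fun_def)
  then show ?thesis
    using hmoreau_le[of \<phi> p \<gamma>' x y] by (cases "\<phi> y") auto
qed

lemma coupling_lower_bound:
  obtains m where "\<And>y. ereal m \<le> \<phi> y + ereal (norm (x\<^sub>0 - y) powr p / (p * \<gamma>\<^sub>1))"
proof -
  obtain m where "hmoreau \<phi> p \<gamma>\<^sub>1 x\<^sub>0 = ereal m"
    using bounded_at hmoreau_less_PInfty[of \<gamma>\<^sub>1 x\<^sub>0] by (cases "hmoreau \<phi> p \<gamma>\<^sub>1 x\<^sub>0") auto
  then show ?thesis
    using that hmoreau_le[of \<phi> p \<gamma>\<^sub>1 x\<^sub>0] by metis
qed

lemma powr_one_plus_less_ratio: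
  obtains \<delta> where "\<delta> > 0" "(1 + \<delta>) powr p < \<gamma>\<^sub>1 / \<gamma>"
proof -
  have "((\<lambda>\<delta>. (1 + \<delta>) powr p) \<longlongrightarrow> (1 + 0) powr p) (at_right (0::real))"
    by (intro tendsto_intros) auto
  moreover have "(1 + 0) powr p < \<gamma>\<^sub>1 / \<gamma>"
    using \<gamma> by simp
  ultimately have "\<forall>\<^sub>F \<delta> in at_right 0. (1 + \<delta>) powr p < \<gamma>\<^sub>1 / \<gamma>"
    by (rule order_tendstoD(2))
  then obtain b where "b > 0" "\<And>\<delta>. 0 < \<delta> \<Longrightarrow> \<delta> < b \<Longrightarrow> (1 + \<delta>) powr p < \<gamma>\<^sub>1 / \<gamma>"
    by (auto simp: eventually_at_right_field)
  then show ?thesis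
    using that[of "b / 2"] by simp
qed

text \<open>Since \<open>\<gamma> < \<gamma>\<^sub>1\<close>, far from x the coupling term \<open>\<parallel>x - y\<parallel>\<^sup>p / (p \<gamma>)\<close> outgrows the lower
  bound \<open>m - \<parallel>x\<^sub>0 - y\<parallel>\<^sup>p / (p \<gamma>\<^sub>1)\<close> of \<open>\<phi> y\<close>, uniformly for x in a ball around \<open>x\<^sub>0\<close>.\<close>

lemma far_coupling_growth:
  assumes m: "\<And>y. ereal m \<le> \<phi> y + ereal (norm (x\<^sub>0 - y) powr p / (p * \<gamma>\<^sub>1))"
    and \<delta>: "\<delta> > 0" "(1 + \<delta>) powr p < \<gamma>\<^sub>1 / \<gamma>"
    and xR: "norm (x - x\<^sub>0) \<le> \<delta> * norm (x - y)" and far: "1 \<le> norm (x - y)"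
    and le: "\<phi> y + ereal (norm (x - y) powr p / (p * \<gamma>)) \<le> ereal M"
  shows "(1 / \<gamma> - (1 + \<delta>) powr p / \<gamma>\<^sub>1) / p * norm (x - y) \<le> M - m"
proof -
  define s where "s = norm (x - y)"
  define \<kappa> where "\<kappa> = (1 / \<gamma> - (1 + \<delta>) powr p / \<gamma>\<^sub>1) / p"
  have "norm (x\<^sub>0 - y) \<le> norm (x - x\<^sub>0) + s"
    using norm_triangle_ineq4[of "x\<^sub>0 - x" "y - x"] by (simp add: s_def norm_minus_commute)
  then have "norm (x\<^sub>0 - y) \<le> (1 + \<delta>) * s"
    using xR by (simp add: s_def algebra_simps)
  then have "norm (x\<^sub>0 - y) powr p \<le> (1 + \<delta>) powr p * s powr p"
    using p \<delta>(1) by (simp add: powr_mono2 flip: powr_mult)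
  then have "norm (x\<^sub>0 - y) powr p / (p * \<gamma>\<^sub>1) \<le> (1 + \<delta>) powr p * s powr p / (p * \<gamma>\<^sub>1)"
    using p \<gamma> by (intro divide_right_mono) auto
  moreover obtain f where f: "\<phi> y = ereal f"
    using le not_MInfty[of y] by (cases "\<phi> y") auto
  ultimately have "m \<le> f + (1 + \<delta>) powr p * s powr p / (p * \<gamma>\<^sub>1)" "f + s powr p / (p * \<gamma>) \<le> M"
    using m[of y] le by (simp_all add: f s_def)
  moreover have "\<kappa> * s powr p = s powr p / (p * \<gamma>) - (1 + \<delta>) powr p * s powr p / (p * \<gamma>\<^sub>1)"
    using p \<gamma> by (simp add: \<kappa>_def field_simps)
  ultimately have "\<kappa> * s powr p \<le> M - m"
    by linarith
  moreover have "\<kappa> * s \<le> \<kappa> * s powr p"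
    using \<delta>(2) \<gamma> p far powr_mono[of 1 p s] by (intro mult_left_mono) (auto simp: \<kappa>_def field_simps s_def)
  ultimately show ?thesis
    by (simp add: \<kappa>_def s_def)
qed

lemma sublevel_bounded:
  obtains S where "\<And>x y. norm (x - x\<^sub>0) \<le> R \<Longrightarrow> \<phi> y + ereal (norm (x - y) powr p / (p * \<gamma>)) \<le> ereal M \<Longrightarrow>
    norm (x - y) \<le> S"
proof -
  obtain m where m: "\<And>y. ereal m \<le> \<phi> y + ereal (norm (x\<^sub>0 - y) powr p / (p * \<gamma>\<^sub>1))"
    using coupling_lower_bound by blast
  obtain \<delta> where \<delta>: "\<delta> > 0" "(1 + \<delta>) powr p < \<gamma>\<^sub>1 / \<gamma>"
    by (rule powr_one_plus_less_ratio)
  define \<kappa> where "\<kappa> = (1 / \<gamma> - (1 + \<delta>) powr p / \<gamma>\<^sub>1) / p"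
  have \<kappa>: "\<kappa> > 0"
    using \<delta>(2) \<gamma> p by (simp add: \<kappa>_def field_simps)
  show ?thesis
  proof (rule that[of "max (max 1 (R / \<delta>)) ((M - m) / \<kappa>)"])
    fix x y
    assume xR: "norm (x - x\<^sub>0) \<le> R" and le: "\<phi> y + ereal (norm (x - y) powr p / (p * \<gamma>)) \<le> ereal M"
    show "norm (x - y) \<le> max (max 1 (R / \<delta>)) ((M - m) / \<kappa>)"
    proof (cases "norm (x - y) \<le> max 1 (R / \<delta>)")
      case False
      then have "1 \<le> norm (x - y)" "R / \<delta> < norm (x - y)"
        by auto
      moreover from this(2) have "norm (x - x\<^sub>0) \<le> \<delta> * norm (x - y)"
        using xR \<delta>(1) by (simp add: pos_divide_less_eq mult.commute)
      ultimately have "\<kappa> * norm (x - y) \<le> M - m"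
        unfolding \<kappa>_def using far_coupling_growth[OF m \<delta>] le by blast
      then have "norm (x - y) \<le> (M - m) / \<kappa>"
        using \<kappa> by (simp add: pos_le_divide_eq mult.commute)
      then show ?thesis
        by simp
    qed simp
  qed
qed

lemma bounded_minimizing_seq:
  assumes xs: "xs \<longlonglongrightarrow> x"
    and lim: "(\<lambda>k. \<phi> (ys k) + ereal (norm (xs k - ys k) powr p / (p * \<gamma>))) \<longlonglongrightarrow> hmoreau \<phi> p \<gamma> x"
  shows "bounded (range ys)"
proof -
  let ?N = "\<lambda>z. norm z powr p / (p * \<gamma>)"
  obtain M where "hmoreau \<phi> p \<gamma> x < ereal M"
    using hmoreau_less_PInfty[of \<gamma> x] by (auto simp: less_PInf_Ex_of_nat)
  with lim have "\<forall>\<^sub>F k in sequentially. \<phi> (ys k) + ereal (?N (xs k - ys k)) < ereal M"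
    by (rule order_tendstoD(2))
  then obtain k\<^sub>0 where k\<^sub>0: "\<And>k. k \<ge> k\<^sub>0 \<Longrightarrow> \<phi> (ys k) + ereal (?N (xs k - ys k)) < ereal M"
    by (auto simp: eventually_sequentially)
  obtain B where B: "\<And>k. norm (xs k) \<le> B"
    using convergent_imp_bounded[OF xs] unfolding bounded_iff by blast
  obtain S where S: "\<And>x y. norm (x - x\<^sub>0) \<le> B + norm x\<^sub>0 \<Longrightarrow> \<phi> y + ereal (?N (x - y)) \<le> ereal M \<Longrightarrow>
      norm (x - y) \<le> S"
    using sublevel_bounded[of "B + norm x\<^sub>0" M] by blast
  have tail: "norm (ys k) \<le> B + S" if "k \<ge> k\<^sub>0" for k
  proof -
    have "norm (xs k - x\<^sub>0) \<le> B + norm x\<^sub>0"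
      using B[of k] norm_triangle_ineq4[of "xs k" x\<^sub>0] by linarith
    then have "norm (xs k - ys k) \<le> S"
      using k\<^sub>0[OF that] by (intro S) auto
    then show ?thesis
      using B[of k] norm_triangle_ineq4[of "xs k" "xs k - ys k"] by simp
  qed
  have "ys k \<in> ys ` {..<k\<^sub>0} \<union> cball 0 (B + S)" for k
    using tail[of k] by (cases "k < k\<^sub>0") auto
  then have "range ys \<subseteq> ys ` {..<k\<^sub>0} \<union> cball 0 (B + S)"
    by blast
  then show "bounded (range ys)"
    by (rule bounded_subset[rotated]) (simp add: bounded_Un finite_imp_bounded)
qed

lemma hprox_of_minimizing_seq:
  assumes xs: "xs \<longlonglongrightarrow> x"
    and lim: "(\<lambda>k. \<phi> (ys k) + ereal (norm (xs k - ys k) powr p / (p * \<gamma>))) \<longlonglongrightarrow> hmoreau \<phi> p \<gamma> x"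
  obtains r y where "strict_mono r" "(ys \<circ> r) \<longlonglongrightarrow> y" "y \<in> hprox \<phi> p \<gamma> x"
proof -
  let ?N = "\<lambda>z. norm z powr p / (p * \<gamma>)"
  obtain y r where r: "strict_mono r" and y: "(ys \<circ> r) \<longlonglongrightarrow> y"
    using bounded_imp_convergent_subsequence[OF bounded_minimizing_seq[OF xs lim]] by blast
  have xs_r: "(xs \<circ> r) \<longlonglongrightarrow> x"
    using LIMSEQ_subseq_LIMSEQ[OF xs r] .
  have N: "(\<lambda>j. ?N (xs (r j) - ys (r j))) \<longlonglongrightarrow> ?N (x - y)"
    using isCont_tendsto_compose[OF has_derivative_continuous[OF has_derivative_pnorm[OF p]]
      tendsto_diff[OF xs_r y]] by (simp add: o_def)
  have "(\<lambda>j. \<phi> (ys (r j))) \<longlonglongrightarrow> hmoreau \<phi> p \<gamma> x + ereal (- ?N (x - y))"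
  proof (rule tendsto_ereal_add_real_cancel)
    show "(\<lambda>j. \<phi> (ys (r j)) + ereal (?N (xs (r j) - ys (r j)))) \<longlonglongrightarrow>
        hmoreau \<phi> p \<gamma> x + ereal (- ?N (x - y)) + ereal (?N (x - y))"
      using LIMSEQ_subseq_LIMSEQ[OF lim r] by (cases "hmoreau \<phi> p \<gamma> x") (simp_all add: o_def)
  qed (rule N)
  with lsc y have "\<phi> y \<le> hmoreau \<phi> p \<gamma> x + ereal (- ?N (x - y))"
    by (intro lsc_fun_tendsto_le[where ys = "ys \<circ> r"]) (simp_all add: o_def)
  then have "\<phi> y + ereal (?N (x - y)) \<le> hmoreau \<phi> p \<gamma> x"
    by (cases "hmoreau \<phi> p \<gamma> x"; cases "\<phi> y") auto
  then have "y \<in> hprox \<phi> p \<gamma> x"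
    using hmoreau_le[of \<phi> p \<gamma> x y] by (simp add: hprox_def)
  with r y show ?thesis
    by (rule that)
qed

lemma hprox_nonempty: "\<exists>y. y \<in> hprox \<phi> p \<gamma> x"
proof -
  let ?F = "\<lambda>y. \<phi> y + ereal (norm (x - y) powr p / (p * \<gamma>))"
  obtain u where u: "\<And>k. u k \<in> range ?F" and u_lim: "u \<longlonglongrightarrow> Inf (range ?F)"
    using Inf_as_limit[of "range ?F"] by auto
  have "\<forall>k. \<exists>y. u k = ?F y"
    using u by blast
  then obtain ys where "u = (\<lambda>k. ?F (ys k))"
    by metis
  then have "(\<lambda>k. \<phi> (ys k) + ereal (norm ((\<lambda>_. x) k - ys k) powr p / (p * \<gamma>))) \<longlonglongrightarrow> hmoreau \<phi> p \<gamma> x"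
    using u_lim by (simp add: hmoreau_def)
  then show ?thesis
    using hprox_of_minimizing_seq[OF tendsto_const] by blast
qed

lemma hmoreau_finite: "\<bar>hmoreau \<phi> p \<gamma> x\<bar> \<noteq> \<infinity>"
proof -
  obtain y where "\<phi> y + ereal (norm (x - y) powr p / (p * \<gamma>)) = hmoreau \<phi> p \<gamma> x"
    using hprox_nonempty[of x] by (auto simp: hprox_def)
  then show ?thesis
    using not_MInfty[of y] hmoreau_less_PInfty[of \<gamma> x] by (cases "\<phi> y") auto
qed

lemma limiting_subdiff_hmoreau:
  assumes "u \<in> limiting_subdiff (hmoreau \<phi> p \<gamma>) x"
  obtains y where "y \<in> hprox \<phi> p \<gamma> x" "u = grad_pnorm p \<gamma> (x - y)"
proof -
  obtain xs vs where xs: "xs \<longlonglongrightarrow> x" and val: "(\<lambda>k. hmoreau \<phi> p \<gamma> (xs k)) \<longlonglongrightarrow> hmoreau \<phi> p \<gamma> x"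
    and vs: "\<And>k. vs k \<in> frechet_subdiff (hmoreau \<phi> p \<gamma>) (xs k)" and vs_lim: "vs \<longlonglongrightarrow> u"
    using limiting_subdiffE[OF assms] by blast
  have "\<forall>k. \<exists>y. y \<in> hprox \<phi> p \<gamma> (xs k)"
    using hprox_nonempty by blast
  then obtain ys where ys: "\<And>k. ys k \<in> hprox \<phi> p \<gamma> (xs k)"
    by metis
  have "(\<lambda>k. \<phi> (ys k) + ereal (norm (xs k - ys k) powr p / (p * \<gamma>))) \<longlonglongrightarrow> hmoreau \<phi> p \<gamma> x"
    using val ys by (simp add: hprox_def)
  with xs obtain r y where r: "strict_mono r" and y: "(ys \<circ> r) \<longlonglongrightarrow> y" "y \<in> hprox \<phi> p \<gamma> x"
    by (rule hprox_of_minimizing_seq)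
  have "(\<lambda>j. grad_pnorm p \<gamma> (xs (r j) - ys (r j))) \<longlonglongrightarrow> grad_pnorm p \<gamma> (x - y)"
    using isCont_tendsto_compose[OF isCont_grad_pnorm[OF p] tendsto_diff[OF LIMSEQ_subseq_LIMSEQ[OF xs r] y(1)]]
    by (simp add: o_def)
  moreover have "vs (r j) = grad_pnorm p \<gamma> (xs (r j) - ys (r j))" for j
    using frechet_subdiff_hmoreau[OF p vs ys] .
  ultimately have "(vs \<circ> r) \<longlonglongrightarrow> grad_pnorm p \<gamma> (x - y)"
    by (simp add: o_def)
  then have "u = grad_pnorm p \<gamma> (x - y)"
    using LIMSEQ_subseq_LIMSEQ[OF vs_lim r] LIMSEQ_unique by blast
  with y(2) show ?thesis
    by (rule that)
qed

lemma hprox_self_of_vanishing_steps: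
  assumes xs: "xs \<longlonglongrightarrow> xb" and val: "(\<lambda>k. hmoreau \<phi> p \<gamma> (xs k)) \<longlonglongrightarrow> hmoreau \<phi> p \<gamma> xb"
    and ys: "\<And>k. ys k \<in> hprox \<phi> p \<gamma> (xs k)" and steps: "(\<lambda>k. xs k - ys k) \<longlonglongrightarrow> 0"
  shows "xb \<in> hprox \<phi> p \<gamma> xb"
proof -
  let ?N = "\<lambda>z. norm z powr p / (p * \<gamma>)"
  have "(\<lambda>k. \<phi> (ys k)) \<longlonglongrightarrow> hmoreau \<phi> p \<gamma> xb"
  proof (rule tendsto_ereal_add_real_cancel)
    show "(\<lambda>k. \<phi> (ys k) + ereal (?N (xs k - ys k))) \<longlonglongrightarrow> hmoreau \<phi> p \<gamma> xb + ereal (?N 0)"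
      using val ys by (simp add: hprox_def)
    show "(\<lambda>k. ?N (xs k - ys k)) \<longlonglongrightarrow> ?N 0"
      using isCont_tendsto_compose[OF has_derivative_continuous[OF has_derivative_pnorm[OF p]] steps] by simp
  qed
  moreover have "ys \<longlonglongrightarrow> xb"
    using tendsto_diff[OF xs steps] by simp
  ultimately have "\<phi> xb \<le> hmoreau \<phi> p \<gamma> xb"
    using lsc by (intro lsc_fun_tendsto_le)
  then show ?thesis
    using hmoreau_le[of \<phi> p \<gamma> xb xb] by (simp add: hprox_def)
qed

lemma KL_exponent_hmoreau:
  assumes \<theta>: "(p - 1) / p \<le> \<theta>" "\<theta> < 1" and KL: "KL_exponent \<phi> \<theta>"
  shows "KL_exponent (hmoreau \<phi> p \<gamma>) \<theta>"
  unfolding KL_exponent_def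
proof (intro ballI)
  let ?e = "hmoreau \<phi> p \<gamma>"
  fix xb assume xb: "xb \<in> dom_subdiff ?e"
  show "KL_exponent_at ?e xb \<theta>"
  proof (rule KL_exponent_atI_sequentially)
    show "0 \<le> \<theta>" "\<theta> < 1" "xb \<in> dom_subdiff ?e"
      using \<theta> xb p by (simp_all add: order.trans[OF _ \<theta>(1)])
    fix xs us
    assume xs: "xs \<longlonglongrightarrow> xb" and val: "(\<lambda>k. ?e (xs k)) \<longlonglongrightarrow> ?e xb"
      and us: "\<And>k. us k \<in> limiting_subdiff ?e (xs k)" and us_lim: "us \<longlonglongrightarrow> 0"
    have "\<forall>k. \<exists>y. y \<in> hprox \<phi> p \<gamma> (xs k) \<and> us k = grad_pnorm p \<gamma> (xs k - y)"
      using limiting_subdiff_hmoreau[OF us] by metis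
    then obtain ys where ys: "\<And>k. ys k \<in> hprox \<phi> p \<gamma> (xs k)"
      and us_eq: "\<And>k. us k = grad_pnorm p \<gamma> (xs k - ys k)"
      by metis
    have steps: "(\<lambda>k. xs k - ys k) \<longlonglongrightarrow> 0"
      using us_lim unfolding us_eq by (rule tendsto_zero_of_grad_pnorm[OF p \<gamma>(1)])
    define s where "s k = norm (xs k - ys k)" for k
    have s: "s \<longlonglongrightarrow> 0" "\<And>k. 0 \<le> s k"
      using tendsto_norm_zero[OF steps] by (simp_all add: s_def[abs_def])
    have ys_lim: "ys \<longlonglongrightarrow> xb"
      using tendsto_diff[OF xs steps] by simp
    have val_eq: "?e (xs k) = \<phi> (ys k) + ereal (s k powr p / (p * \<gamma>))" for k
      using ys[of k] by (simp add: hprox_def s_def)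
    have xb_val: "?e xb = \<phi> xb"
      using hprox_self_of_vanishing_steps[OF xs val ys steps] by (simp add: hprox_def)
    then have "0 \<in> frechet_subdiff \<phi> xb"
      using grad_pnorm_frechet_subdiff_hprox[OF p _ hmoreau_finite, of xb xb] by (simp add: hprox_def)
    then have KL_xb: "KL_exponent_at \<phi> xb \<theta>"
      using KL frechet_subdiff_imp_dom unfolding KL_exponent_def by blast
    have g: "us k \<in> limiting_subdiff \<phi> (ys k)" for k
      using grad_pnorm_frechet_subdiff_hprox[OF p ys hmoreau_finite] us_eq
      by (simp add: frechet_subdiff_imp_limiting)
    have "(\<lambda>k. \<phi> (ys k) + ereal (s k powr p / (p * \<gamma>))) \<longlonglongrightarrow> \<phi> xb"
      using val by (simp only: val_eq xb_val)
    then obtain K where K: "\<forall>\<^sub>F k in sequentially.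
        real_of_ereal \<bar>\<phi> (ys k) + ereal (s k powr p / (p * \<gamma>)) - \<phi> xb\<bar> powr \<theta>
          \<le> K * (norm (us k) + s k powr (p - 1) / \<gamma>)"
      using KL_exponent_at_perturbed_eventually[OF KL_xb p \<gamma>(1) \<theta>(1) ys_lim s g] by blast
    have "norm (us k) = s k powr (p - 1) / \<gamma>" for k
      using \<gamma> by (simp add: us_eq s_def norm_grad_pnorm)
    with K have "\<forall>\<^sub>F k in sequentially. real_of_ereal \<bar>?e (xs k) - ?e xb\<bar> powr \<theta> \<le> 2 * K * norm (us k)"
      by (simp add: val_eq xb_val mult_ac)
    then show "\<exists>K. \<forall>\<^sub>F k in sequentially. real_of_ereal \<bar>?e (xs k) - ?e xb\<bar> powr \<theta> \<le> K * norm (us k)"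
      by blast
  qed
qed

end

theorem theorem4:
  fixes \<phi> :: "real ^ 'n \<Rightarrow> ereal" and p \<theta> :: real
  assumes "p > 1"
    and "proper_fun \<phi>" and "lsc_fun \<phi>"
    and "(p - 1) / p \<le> \<theta>" and "\<theta> < 1"
    and "KL_exponent \<phi> \<theta>"
  shows "(\<forall>\<gamma>>0. KL_exponent
            (\<lambda>(x, y). \<phi> y + ereal (norm (x - y) powr p / (p * \<gamma>))) \<theta>)
       \<and> (hprox_bounded \<phi> p \<and> hprox_threshold \<phi> p > 0 \<longrightarrow>
            (\<forall>\<gamma>. 0 < \<gamma> \<and> ereal \<gamma> < hprox_threshold \<phi> p \<longrightarrow>
                  KL_exponent (hmoreau \<phi> p \<gamma>) \<theta>))"
proof (intro conjI allI impI)
  fix \<gamma> :: real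
  assume "\<gamma> > 0"
  from KL_exponent_moreau_coupling[OF assms(1) this assms(4-6)]
  show "KL_exponent (\<lambda>(x, y). \<phi> y + ereal (norm (x - y) powr p / (p * \<gamma>))) \<theta>"
    unfolding moreau_coupling_def .
next
  \<comment> \<open>The premise \<open>hprox_bounded \<phi> p \<and> hprox_threshold \<phi> p > 0\<close> is implied by the choice of \<open>\<gamma>\<close>.\<close>
  fix \<gamma> :: real
  assume \<gamma>: "0 < \<gamma> \<and> ereal \<gamma> < hprox_threshold \<phi> p"
  then obtain \<gamma>\<^sub>1 x\<^sub>0 where "\<gamma> < \<gamma>\<^sub>1" "hmoreau \<phi> p \<gamma>\<^sub>1 x\<^sub>0 > -\<infinity>"
    unfolding hprox_threshold_def less_Sup_iff by auto
  with assms \<gamma> interpret hmoreau_below_threshold \<phi> p \<gamma> \<gamma>\<^sub>1 x\<^sub>0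
    by unfold_locales auto
  show "KL_exponent (hmoreau \<phi> p \<gamma>) \<theta>"
    by (rule KL_exponent_hmoreau[OF assms(4-6)])
qed
end
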